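(* Under the hypotheses of the Point SAGA convergence theorem (each $f_i$ differentiable and $\mu$-strongly convex with $\mu>0$, and the Point-SAGA similarity bound with constant $\nu>0$), run Point SAGA with stepsize $\gamma=\frac{1}{\nu^2/\mu+(n-1)\mu}$ and let $\Psi_k:=\|x_k-x_\star\|^2+\gamma\mu\sum_{i=1}^n\|w_k^i-x_\star\|^2$. Then for any $\varepsilon>0$, $$k\ge\left(n+\frac{\nu^2}{\mu^2}\right)\log\left(\frac{\Psi_0}{\varepsilon}\right)\quad\Longrightarrow\quad\mathbb{E}[\Psi_k]\le\varepsilon.$$
   Context: Setting: $f(x)=\frac1n\sum_{i=1}^nf_i(x)$, $x_\star$ its minimizer. Point-SAGA similarity bound: for all $x^1,\dots,x^n\in\mathbb{R}^d$, $\frac1n\sum_{j=1}^n\|\nabla f_j(x^j)-\frac1n\sum_{i=1}^n\nabla f_i(x^i)-\nabla f_j(x_\star)\|^2\le\nu^2\frac1n\sum_{j=1}^n\|x^j-x_\star\|^2$. Point SAGA: parameters $\gamma>0$, $x_0,w_0^1,\dots,w_0^n\in\mathbb{R}^d$. For $k\ge0$: sample $i_k$ uniformly from $[n]$ independently; $h_k=\nabla f_{i_k}(w_k^{i_k})-\frac1n\sum_{j=1}^n\nabla f_j(w_k^j)$; $x_{k+1}=\operatorname{prox}_{\gamma f_{i_k}}(x_k+\gamma h_k)$; $w_{k+1}^{i_k}=x_{k+1}$, $w_{k+1}^j=w_k^j$ for $j\ne i_k$. $\operatorname{prox}_{\gamma\phi}(y):=\arg\min_x\{\phi(x)+\frac1{2\gamma}\|x-y\|^2\}$.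 *)

theory Defs
  imports "HOL-Analysis.Analysis"
begin

definition strongly_convex :: "real \<Rightarrow> ('a::euclidean_space \<Rightarrow> real) \<Rightarrow> bool" where
  "strongly_convex mu f \<longleftrightarrow> convex_on UNIV (\<lambda>x. f x - mu / 2 * (norm x)\<^sup>2)"

definition grad :: "('a::euclidean_space \<Rightarrow> real) \<Rightarrow> 'a \<Rightarrow> 'a" where
  "grad f x = (SOME g. (f has_derivative (\<lambda>h. g \<bullet> h)) (at x))"

definition prox :: "real \<Rightarrow> ('a::euclidean_space \<Rightarrow> real) \<Rightarrow> 'a \<Rightarrow> 'a" where
  "prox gamma phi y = (SOME x. \<forall>z. phi x + (norm (x - y))\<^sup>2 / (2 * gamma)
                                   \<le> phi z + (norm (z - y))\<^sup>2 / (2 * gamma))"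

text \<open>One Point SAGA step with sampled index i (indices are 0..n-1).
  State: (x_k, w_k) with w_k :: nat => 'a.\<close>
definition psaga_step :: "nat \<Rightarrow> (nat \<Rightarrow> 'a::euclidean_space \<Rightarrow> real) \<Rightarrow> real
    \<Rightarrow> 'a \<times> (nat \<Rightarrow> 'a) \<Rightarrow> nat \<Rightarrow> 'a \<times> (nat \<Rightarrow> 'a)" where
  "psaga_step n f gamma s i =
     (let x = fst s; w = snd s;
          h = grad (f i) (w i) - (1 / real n) *\<^sub>R (\<Sum>j<n. grad (f j) (w j));
          x' = prox gamma (f i) (x + gamma *\<^sub>R h)
      in (x', w(i := x')))"

definition psaga_run :: "nat \<Rightarrow> (nat \<Rightarrow> 'a::euclidean_space \<Rightarrow> real) \<Rightarrow> real
    \<Rightarrow> 'a \<times> (nat \<Rightarrow> 'a) \<Rightarrow> nat list \<Rightarrow> 'a \<times> (nat \<Rightarrow> 'a)" where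
  "psaga_run n f gamma s0 is = foldl (psaga_step n f gamma) s0 is"

definition psaga_Psi :: "nat \<Rightarrow> real \<Rightarrow> real \<Rightarrow> 'a::euclidean_space \<Rightarrow> 'a \<times> (nat \<Rightarrow> 'a) \<Rightarrow> real" where
  "psaga_Psi n gamma mu xs s =
     (norm (fst s - xs))\<^sup>2 + gamma * mu * (\<Sum>i<n. (norm (snd s i - xs))\<^sup>2)"

text \<open>Expectation of Psi_k when i_0,...,i_{k-1} are i.i.d. uniform on {0..<n}:
  average over all n^k index sequences.\<close>
definition psaga_EPsi :: "nat \<Rightarrow> (nat \<Rightarrow> 'a::euclidean_space \<Rightarrow> real) \<Rightarrow> real \<Rightarrow> real
    \<Rightarrow> 'a \<Rightarrow> 'a \<times> (nat \<Rightarrow> 'a) \<Rightarrow> nat \<Rightarrow> real" where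
  "psaga_EPsi n f gamma mu xs s0 k =
     (\<Sum>is \<in> {is. length is = k \<and> set is \<subseteq> {..<n}}.
        psaga_Psi n gamma mu xs (psaga_run n f gamma s0 is)) / (real n ^ k)"

end

theory Submission
  imports Defs
begin

text \<open>Each Point SAGA step is a resolvent step of a strongly monotone gradient, so its output
  is closer to \<open>x\<^sub>\<star>\<close> than its input by the factor \<open>1 + \<gamma>\<mu>\<close>. The input
  \<open>x\<^sub>k - x\<^sub>\<star> + \<gamma> d\<^sub>i\<close> has a correction \<open>d\<^sub>i\<close> of mean zero over the
  random index, and the similarity bound controls its second moment by the table
  \<open>\<Sum> \<parallel>w\<^sub>k\<^sup>i - x\<^sub>\<star>\<parallel>\<^sup>2\<close>. With this stepsize the two effects balance in the
  Lyapunov function \<open>\<Psi>\<close>, which therefore contracts in expectation by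
  \<open>1/(1 + \<gamma>\<mu>) = 1 - 1/(n + \<nu>\<^sup>2/\<mu>\<^sup>2)\<close> per step; the iteration count follows from
  \<open>1 - t \<le> exp (-t)\<close>.\<close>

lemma has_derivative_grad:
  fixes f :: "'a::euclidean_space \<Rightarrow> real"
  assumes "f differentiable (at x)"
  shows "(f has_derivative (\<lambda>h. grad f x \<bullet> h)) (at x)"
proof -
  obtain f' where D: "(f has_derivative f') (at x)"
    using assms differentiable_def by blast
  have lin: "linear f'" using D has_derivative_linear by blast
  define g where "g = (\<Sum>b\<in>Basis. f' b *\<^sub>R b)"
  have "f' = (\<lambda>h. g \<bullet> h)"
  proof
    fix h :: 'a
    have "f' h = f' (\<Sum>b\<in>Basis. (h \<bullet> b) *\<^sub>R b)" by (simp add: euclidean_representation)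
    also have "\<dots> = (\<Sum>b\<in>Basis. (h \<bullet> b) * f' b)" using lin by (simp add: linear_sum linear_scale)
    also have "\<dots> = g \<bullet> h" by (simp add: g_def inner_sum_right inner_commute mult.commute)
    finally show "f' h = g \<bullet> h" .
  qed
  with D have "\<exists>g. (f has_derivative (\<lambda>h. g \<bullet> h)) (at x)" by blast
  then show ?thesis unfolding grad_def by (rule someI_ex)
qed

lemma gradient_eq_0_at_global_min:
  fixes \<phi> :: "'a::real_inner \<Rightarrow> real"
  assumes "(\<phi> has_derivative (\<lambda>h. g \<bullet> h)) (at p)" and "\<And>z. \<phi> p \<le> \<phi> z"
  shows "g = 0"
proof -
  have "(\<lambda>h. g \<bullet> h) = (\<lambda>h. 0)"
    by (rule differential_zero_maxmin[OF _ open_UNIV assms(1)]) (use assms(2) in auto)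
  then have "g \<bullet> g = 0" by metis
  then show ?thesis by simp
qed

lemma strongly_convex_above_tangent:
  fixes f :: "'a::euclidean_space \<Rightarrow> real"
  assumes sc: "strongly_convex mu f" and d: "f differentiable (at x)"
  shows "f z \<ge> f x + grad f x \<bullet> (z - x) + mu / 2 * (norm (z - x))\<^sup>2"
proof -
  define \<phi> where "\<phi> y = f y - mu / 2 * (norm y)\<^sup>2" for y
  define v where "v = z - x"
  define g where "g t = \<phi> (x + t *\<^sub>R v)" for t :: real
  have cv: "convex_on UNIV \<phi>" using sc unfolding strongly_convex_def \<phi>_def .
  have cg: "convex_on UNIV g"
  proof (rule convex_onI)
    fix t a b :: real
    have "x + ((1 - t) *\<^sub>R a + t *\<^sub>R b) *\<^sub>R v = (1 - t) *\<^sub>R (x + a *\<^sub>R v) + t *\<^sub>R (x + b *\<^sub>R v)"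
      by (simp add: algebra_simps)
    moreover assume "0 < t" "t < 1"
    ultimately show "g ((1 - t) *\<^sub>R a + t *\<^sub>R b) \<le> (1 - t) * g a + t * g b"
      unfolding g_def using convex_onD[OF cv, of t] by simp
  qed simp
  have "(\<phi> has_derivative (\<lambda>h. grad f x \<bullet> h - mu / 2 * (h \<bullet> x + x \<bullet> h))) (at x)"
    using has_derivative_grad[OF d] unfolding \<phi>_def power2_norm_eq_inner
    by (intro derivative_eq_intros) auto
  then have D: "(\<phi> has_derivative (\<lambda>h. (grad f x - mu *\<^sub>R x) \<bullet> h)) (at x)"
    by (simp add: inner_diff_left inner_commute algebra_simps)
  have "((\<lambda>t::real. x + t *\<^sub>R v) has_derivative (\<lambda>t. t *\<^sub>R v)) (at 0)"
    by (intro derivative_eq_intros) auto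
  from has_derivative_compose[OF this, of \<phi> "\<lambda>h. (grad f x - mu *\<^sub>R x) \<bullet> h"] D
  have "((\<lambda>t. \<phi> (x + t *\<^sub>R v)) has_derivative (\<lambda>t. (grad f x - mu *\<^sub>R x) \<bullet> (t *\<^sub>R v))) (at 0)"
    by simp
  then have "(g has_field_derivative ((grad f x - mu *\<^sub>R x) \<bullet> v)) (at 0 within UNIV)"
    unfolding g_def has_field_derivative_def by (simp add: mult.commute[of _ "_ \<bullet> v"])
  from convex_on_imp_above_tangent[OF cg _ _ _ this, of 1]
  have "(grad f x - mu *\<^sub>R x) \<bullet> v \<le> g 1 - g 0" by simp
  then show ?thesis
    by (simp add: g_def \<phi>_def v_def power2_norm_eq_inner inner_diff_left inner_diff_right
        inner_commute algebra_simps)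
qed

lemma strongly_convex_grad_monotone:
  fixes f :: "'a::euclidean_space \<Rightarrow> real"
  assumes sc: "strongly_convex mu f" and "f differentiable (at x)" "f differentiable (at z)"
  shows "(grad f z - grad f x) \<bullet> (z - x) \<ge> mu * (norm (z - x))\<^sup>2"
proof -
  have "f z \<ge> f x + grad f x \<bullet> (z - x) + mu / 2 * (norm (z - x))\<^sup>2"
    and "f x \<ge> f z + grad f z \<bullet> (x - z) + mu / 2 * (norm (x - z))\<^sup>2"
    using strongly_convex_above_tangent[OF sc] assms(2,3) by blast+
  then show ?thesis
    by (simp add: norm_minus_commute[of x z] inner_diff_left inner_diff_right)
qed

lemma continuous_attains_global_min_if_coercive:
  fixes \<phi> :: "'a::euclidean_space \<Rightarrow> real"
  assumes "continuous_on UNIV \<phi>" and "0 \<le> R" and "\<And>z. norm z > R \<Longrightarrow> \<phi> 0 < \<phi> z"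
  shows "\<exists>m. \<forall>z. \<phi> m \<le> \<phi> z"
proof -
  obtain m where m: "\<And>z. z \<in> cball 0 R \<Longrightarrow> \<phi> m \<le> \<phi> z"
    using continuous_attains_inf[OF compact_cball _ continuous_on_subset[OF assms(1)]] assms(2)
    by (metis cball_eq_empty not_less subset_UNIV)
  have "\<phi> m \<le> \<phi> z" for z
    using m[of z] m[of 0] assms(2) assms(3)[of z] by (cases "norm z \<le> R") auto
  then show ?thesis by blast
qed

lemma prox_minimizes:
  fixes f :: "'a::euclidean_space \<Rightarrow> real"
  assumes sc: "strongly_convex mu f" and mu: "mu > 0" and d: "\<And>x. f differentiable (at x)"
    and ga: "gamma > 0"
  shows "f (prox gamma f y) + (norm (prox gamma f y - y))\<^sup>2 / (2 * gamma)
           \<le> f z + (norm (z - y))\<^sup>2 / (2 * gamma)"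
proof -
  define \<psi> where "\<psi> z = f z + (norm (z - y))\<^sup>2 / (2 * gamma)" for z
  define G where "G = norm (grad f 0)"
  define Y where "Y = (norm y)\<^sup>2 / (2 * gamma)"
  define R where "R = 1 + 2 * G / mu + 2 * Y / mu"
  have "G \<ge> 0" "Y \<ge> 0" using ga by (auto simp: G_def Y_def)
  then have R: "R \<ge> 1" using mu by (simp add: R_def)
  have "continuous_on UNIV \<psi>"
    unfolding \<psi>_def using d ga
    by (intro continuous_intros continuous_at_imp_continuous_on ballI differentiable_imp_continuous_within)
      auto
  moreover have "\<psi> 0 < \<psi> z" if "norm z > R" for z
  proof -
    define t where "t = norm z"
    have "- (G * t) \<le> grad f 0 \<bullet> z"
      using norm_cauchy_schwarz[of "- grad f 0" z] by (simp add: G_def t_def)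
    with strongly_convex_above_tangent[OF sc d, of 0 z]
    have fz: "f 0 - G * t + mu / 2 * t\<^sup>2 \<le> f z" by (simp add: t_def)
    have "mu / 2 * t > mu / 2 * R" using that mu by (simp add: t_def)
    moreover have "mu / 2 * R = mu / 2 + G + Y" using mu by (simp add: R_def field_simps)
    ultimately have c: "mu / 2 * t - G > Y" using mu by linarith
    have "1 * (mu / 2 * t - G) \<le> t * (mu / 2 * t - G)"
      using that R c \<open>Y \<ge> 0\<close> by (intro mult_right_mono) (auto simp: t_def)
    then have "Y < mu / 2 * t\<^sup>2 - G * t" using c by (simp add: power2_eq_square algebra_simps)
    moreover have "0 \<le> (norm (z - y))\<^sup>2 / (2 * gamma)" using ga by simp
    ultimately show ?thesis using fz by (simp add: \<psi>_def Y_def)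
  qed
  ultimately have "\<exists>m. \<forall>z. \<psi> m \<le> \<psi> z"
    using R by (intro continuous_attains_global_min_if_coercive[of \<psi> R]) auto
  then have "\<forall>z. \<psi> (prox gamma f y) \<le> \<psi> z"
    unfolding prox_def \<psi>_def by (rule someI_ex)
  then show ?thesis unfolding \<psi>_def by blast
qed

lemma prox_optimality:
  fixes f :: "'a::euclidean_space \<Rightarrow> real"
  assumes sc: "strongly_convex mu f" and mu: "mu > 0" and d: "\<And>x. f differentiable (at x)"
    and ga: "gamma > 0"
  shows "prox gamma f y + gamma *\<^sub>R grad f (prox gamma f y) = y"
proof -
  define p where "p = prox gamma f y"
  have "((\<lambda>z. f z + ((z - y) \<bullet> (z - y)) / (2 * gamma)) has_derivative
      (\<lambda>h. grad f p \<bullet> h + (h \<bullet> (p - y) + (p - y) \<bullet> h) / (2 * gamma))) (at p)"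
    using has_derivative_grad[OF d] ga by (intro derivative_eq_intros) auto
  moreover have "grad f p \<bullet> h + (h \<bullet> (p - y) + (p - y) \<bullet> h) / (2 * gamma)
      = (grad f p + (1 / gamma) *\<^sub>R (p - y)) \<bullet> h" for h
    by (simp add: inner_commute[of h] inner_add_left add_divide_distrib)
  ultimately have "((\<lambda>z. f z + (norm (z - y))\<^sup>2 / (2 * gamma)) has_derivative
      (\<lambda>h. (grad f p + (1 / gamma) *\<^sub>R (p - y)) \<bullet> h)) (at p)"
    by (simp add: power2_norm_eq_inner)
  then have "grad f p + (1 / gamma) *\<^sub>R (p - y) = 0"
    by (rule gradient_eq_0_at_global_min) (use prox_minimizes[OF assms] p_def in blast)
  then have "gamma *\<^sub>R (grad f p + (1 / gamma) *\<^sub>R (p - y)) = 0" by simp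
  then have "gamma *\<^sub>R grad f p + (p - y) = 0" using ga by (simp add: scaleR_add_right)
  then show ?thesis by (simp add: p_def algebra_simps)
qed

lemma resolvent_norm_contraction:
  fixes a b v :: "'a::real_inner"
  assumes "a + g *\<^sub>R b = v" and "b \<bullet> a \<ge> mu * (norm a)\<^sup>2" and "g \<ge> 0" and "mu \<ge> 0"
  shows "(1 + g * mu)\<^sup>2 * (norm a)\<^sup>2 \<le> (norm v)\<^sup>2"
proof -
  have "(1 + g * mu) * (norm a)\<^sup>2 \<le> (norm a)\<^sup>2 + g * (b \<bullet> a)"
    using assms(2,3) mult_left_mono[OF assms(2) assms(3)] by (simp add: algebra_simps)
  also have "\<dots> = a \<bullet> v"
    using assms(1)[symmetric] by (simp add: inner_add_right power2_norm_eq_inner inner_commute)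
  also have "\<dots> \<le> norm a * norm v" by (rule norm_cauchy_schwarz)
  finally have "((1 + g * mu) * norm a) * norm a \<le> norm v * norm a"
    by (simp add: power2_eq_square algebra_simps)
  then have "(1 + g * mu) * norm a \<le> norm v"
    by (cases "norm a = 0") simp_all
  moreover have "0 \<le> (1 + g * mu) * norm a" using assms(3,4) by simp
  ultimately show ?thesis using power_mono[of _ _ 2] by (fastforce simp: power_mult_distrib)
qed

lemma sum_norm_sq_add_zero_sum:
  fixes u :: "'a::real_inner" and d :: "'b \<Rightarrow> 'a"
  assumes "(\<Sum>i\<in>A. d i) = 0"
  shows "(\<Sum>i\<in>A. (norm (u + g *\<^sub>R d i))\<^sup>2)
    = real (card A) * (norm u)\<^sup>2 + g\<^sup>2 * (\<Sum>i\<in>A. (norm (d i))\<^sup>2)"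
proof -
  have "(norm (u + g *\<^sub>R d i))\<^sup>2 = (norm u)\<^sup>2 + 2 * g * (u \<bullet> d i) + g\<^sup>2 * (norm (d i))\<^sup>2" for i
    unfolding power2_norm_eq_inner
    by (simp add: inner_add_left inner_add_right inner_commute power2_eq_square algebra_simps
        del: inner_real_def)
  then have "(\<Sum>i\<in>A. (norm (u + g *\<^sub>R d i))\<^sup>2)
      = real (card A) * (norm u)\<^sup>2 + 2 * g * (u \<bullet> (\<Sum>i\<in>A. d i)) + g\<^sup>2 * (\<Sum>i\<in>A. (norm (d i))\<^sup>2)"
    by (simp add: sum.distrib sum_distrib_left inner_sum_right)
  then show ?thesis using assms by simp
qed

lemma sum_norm_sq_fun_upd:
  fixes w :: "'b \<Rightarrow> 'a::real_normed_vector"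
  assumes "finite A" and "i \<in> A"
  shows "(\<Sum>j\<in>A. (norm ((w(i := z)) j - c))\<^sup>2)
        = (\<Sum>j\<in>A. (norm (w j - c))\<^sup>2) - (norm (w i - c))\<^sup>2 + (norm (z - c))\<^sup>2"
  using sum.remove[OF assms, of "\<lambda>j. (norm ((w(i := z)) j - c))\<^sup>2"]
    sum.remove[OF assms, of "\<lambda>j. (norm (w j - c))\<^sup>2"]
  by (simp add: sum.cong[of "A - {i}" _ "\<lambda>j. (norm ((w(i := z)) j - c))\<^sup>2" "\<lambda>j. (norm (w j - c))\<^sup>2"])

lemma grad_sum_eq_0_at_minimizer:
  fixes f :: "'b \<Rightarrow> 'a::euclidean_space \<Rightarrow> real"
  assumes "finite A" and "\<And>i. i \<in> A \<Longrightarrow> f i differentiable (at xs)"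
    and "\<And>y. (\<Sum>i\<in>A. f i xs) \<le> (\<Sum>i\<in>A. f i y)"
  shows "(\<Sum>i\<in>A. grad (f i) xs) = 0"
proof (rule gradient_eq_0_at_global_min)
  show "((\<lambda>y. \<Sum>i\<in>A. f i y) has_derivative (\<lambda>h. (\<Sum>i\<in>A. grad (f i) xs) \<bullet> h)) (at xs)"
    unfolding inner_sum_left
    by (intro has_derivative_sum has_derivative_grad assms(2))
qed (use assms(3) in blast)

definition point_saga_similarity ::
    "nat \<Rightarrow> (nat \<Rightarrow> 'a::euclidean_space \<Rightarrow> real) \<Rightarrow> real \<Rightarrow> 'a \<Rightarrow> bool" where
  "point_saga_similarity n f nu xstar \<longleftrightarrow> (\<forall>xs.
     (1 / real n) * (\<Sum>j<n. (norm (grad (f j) (xs j)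
        - (1 / real n) *\<^sub>R (\<Sum>i<n. grad (f i) (xs i)) - grad (f j) xstar))\<^sup>2)
     \<le> nu\<^sup>2 * ((1 / real n) * (\<Sum>j<n. (norm (xs j - xstar))\<^sup>2)))"

lemma psaga_Psi_fun_upd:
  assumes "i < n"
  shows "psaga_Psi n gamma mu c (z, w(i := z))
    = (1 + gamma * mu) * (norm (z - c))\<^sup>2 + gamma * mu * (\<Sum>j<n. (norm (w j - c))\<^sup>2)
      - gamma * mu * (norm (w i - c))\<^sup>2"
proof -
  have "(\<Sum>j<n. (norm ((w(i := z)) j - c))\<^sup>2)
      = (\<Sum>j<n. (norm (w j - c))\<^sup>2) - (norm (w i - c))\<^sup>2 + (norm (z - c))\<^sup>2"
    by (rule sum_norm_sq_fun_upd) (use assms in auto)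
  then show ?thesis
    by (simp only: psaga_Psi_def fst_conv snd_conv) (simp add: algebra_simps)
qed

lemma psaga_step_sum_dist_bound:
  fixes f :: "nat \<Rightarrow> 'a::euclidean_space \<Rightarrow> real"
  assumes n: "n \<ge> 1"
    and diff: "\<And>i x. i < n \<Longrightarrow> f i differentiable (at x)"
    and sconv: "\<And>i. i < n \<Longrightarrow> strongly_convex mu (f i)"
    and mu: "mu > 0" and ga: "gamma > 0"
    and stationary: "(\<Sum>i<n. grad (f i) xstar) = 0"
    and sim: "point_saga_similarity n f nu xstar"
  shows "(1 + gamma * mu)\<^sup>2 * (\<Sum>i<n. (norm (fst (psaga_step n f gamma (x, w) i) - xstar))\<^sup>2)
    \<le> real n * (norm (x - xstar))\<^sup>2 + gamma\<^sup>2 * nu\<^sup>2 * (\<Sum>j<n. (norm (w j - xstar))\<^sup>2)"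
proof -
  define gbar where "gbar = (1 / real n) *\<^sub>R (\<Sum>j<n. grad (f j) (w j))"
  define d where "d i = grad (f i) (w i) - gbar - grad (f i) xstar" for i
  define z where "z i = fst (psaga_step n f gamma (x, w) i)" for i
  have contraction:
    "(1 + gamma * mu)\<^sup>2 * (norm (z i - xstar))\<^sup>2 \<le> (norm ((x - xstar) + gamma *\<^sub>R d i))\<^sup>2"
    if "i < n" for i
  proof (rule resolvent_norm_contraction)
    have "z i + gamma *\<^sub>R grad (f i) (z i) = x + gamma *\<^sub>R (grad (f i) (w i) - gbar)"
      unfolding z_def psaga_step_def gbar_def Let_def fst_conv snd_conv
      by (rule prox_optimality[OF sconv[OF that] mu diff[OF that] ga])
    then show "(z i - xstar) + gamma *\<^sub>R (grad (f i) (z i) - grad (f i) xstar)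
        = (x - xstar) + gamma *\<^sub>R d i"
      by (simp add: d_def algebra_simps)
    show "(grad (f i) (z i) - grad (f i) xstar) \<bullet> (z i - xstar) \<ge> mu * (norm (z i - xstar))\<^sup>2"
      by (rule strongly_convex_grad_monotone[OF sconv[OF that] diff[OF that] diff[OF that]])
  qed (use ga mu in auto)
  have "(\<Sum>i<n. d i) = (\<Sum>i<n. grad (f i) (w i)) - real n *\<^sub>R gbar - (\<Sum>i<n. grad (f i) xstar)"
    by (simp add: d_def sum_subtractf sum_constant_scaleR)
  then have "(\<Sum>i<n. d i) = 0" using n stationary by (simp add: gbar_def)
  then have "(\<Sum>i<n. (norm ((x - xstar) + gamma *\<^sub>R d i))\<^sup>2)
      = real n * (norm (x - xstar))\<^sup>2 + gamma\<^sup>2 * (\<Sum>i<n. (norm (d i))\<^sup>2)"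
    using sum_norm_sq_add_zero_sum by fastforce
  moreover have "(\<Sum>i<n. (norm (d i))\<^sup>2) \<le> nu\<^sup>2 * (\<Sum>j<n. (norm (w j - xstar))\<^sup>2)"
    using sim n unfolding point_saga_similarity_def
    by (auto simp: d_def gbar_def field_simps dest: spec[of _ w])
  then have "gamma\<^sup>2 * (\<Sum>i<n. (norm (d i))\<^sup>2) \<le> gamma\<^sup>2 * nu\<^sup>2 * (\<Sum>j<n. (norm (w j - xstar))\<^sup>2)"
    by (simp add: mult.assoc mult_left_mono)
  ultimately have "(\<Sum>i<n. (norm ((x - xstar) + gamma *\<^sub>R d i))\<^sup>2)
      \<le> real n * (norm (x - xstar))\<^sup>2 + gamma\<^sup>2 * nu\<^sup>2 * (\<Sum>j<n. (norm (w j - xstar))\<^sup>2)"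
    by simp
  moreover have "(1 + gamma * mu)\<^sup>2 * (\<Sum>i<n. (norm (z i - xstar))\<^sup>2)
      \<le> (\<Sum>i<n. (norm ((x - xstar) + gamma *\<^sub>R d i))\<^sup>2)"
    unfolding sum_distrib_left by (rule sum_mono) (use contraction in auto)
  ultimately show ?thesis by (simp add: z_def)
qed

lemma psaga_step_contraction:
  fixes f :: "nat \<Rightarrow> 'a::euclidean_space \<Rightarrow> real"
  assumes n: "n \<ge> 1"
    and diff: "\<And>i x. i < n \<Longrightarrow> f i differentiable (at x)"
    and sconv: "\<And>i. i < n \<Longrightarrow> strongly_convex mu (f i)"
    and mu: "mu > 0" and ga: "gamma > 0"
    and stationary: "(\<Sum>i<n. grad (f i) xstar) = 0"
    and sim: "point_saga_similarity n f nu xstar"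
    and stepsize: "gamma * (nu\<^sup>2 + (real n - 1) * mu\<^sup>2) \<le> mu"
  shows "(\<Sum>i<n. psaga_Psi n gamma mu xstar (psaga_step n f gamma s i))
    \<le> real n / (1 + gamma * mu) * psaga_Psi n gamma mu xstar s"
proof -
  obtain x w where s: "s = (x, w)" by fastforce
  define z where "z i = fst (psaga_step n f gamma (x, w) i)" for i
  define X where "X = (norm (x - xstar))\<^sup>2"
  define S where "S = (\<Sum>j<n. (norm (w j - xstar))\<^sup>2)"
  define T where "T = (\<Sum>i<n. (norm (z i - xstar))\<^sup>2)"
  define \<kappa> where "\<kappa> = 1 + gamma * mu"
  have \<kappa>: "\<kappa> > 0" using ga mu by (simp add: \<kappa>_def add_pos_pos)
  have "S \<ge> 0" by (simp add: S_def sum_nonneg)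
  have "psaga_step n f gamma (x, w) i = (z i, w(i := z i))" for i
    by (simp add: psaga_step_def z_def Let_def)
  then have lhs: "(\<Sum>i<n. psaga_Psi n gamma mu xstar (psaga_step n f gamma s i))
      = \<kappa> * T + real n * (gamma * mu * S) - gamma * mu * S"
    by (simp add: s psaga_Psi_fun_upd sum_subtractf sum.distrib sum_distrib_left T_def S_def \<kappa>_def)
  have "\<kappa> * (\<kappa> * T + real n * (gamma * mu * S) - gamma * mu * S)
      = \<kappa>\<^sup>2 * T + (real n - 1) * gamma * mu * \<kappa> * S"
    by (simp add: power2_eq_square algebra_simps)
  also have "\<dots> \<le> real n * X + gamma\<^sup>2 * nu\<^sup>2 * S + (real n - 1) * gamma * mu * \<kappa> * S"
    using psaga_step_sum_dist_bound[OF n diff sconv mu ga stationary sim, of x w]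
    by (simp add: \<kappa>_def T_def X_def S_def z_def)
  also have "\<dots> = real n * X + gamma * S * (gamma * (nu\<^sup>2 + (real n - 1) * mu\<^sup>2))
      + (real n - 1) * gamma * mu * S"
    by (simp add: \<kappa>_def power2_eq_square algebra_simps)
  also have "\<dots> \<le> real n * X + gamma * S * mu + (real n - 1) * gamma * mu * S"
    using stepsize ga \<open>S \<ge> 0\<close> by (simp add: mult_left_mono)
  also have "\<dots> = real n * (X + gamma * mu * S)"
    by (simp add: algebra_simps)
  finally have "\<kappa> * (\<Sum>i<n. psaga_Psi n gamma mu xstar (psaga_step n f gamma s i))
      \<le> real n * (X + gamma * mu * S)"
    unfolding lhs .
  then show ?thesis
    using \<kappa> by (simp add: s psaga_Psi_def X_def S_def \<kappa>_def field_simps)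
qed

lemma psaga_EPsi_0: "psaga_EPsi n f gamma mu xs s 0 = psaga_Psi n gamma mu xs s"
proof -
  have "{is. length is = 0 \<and> set is \<subseteq> {..<n}} = {[]}" by auto
  then show ?thesis by (simp add: psaga_EPsi_def psaga_run_def)
qed

lemma psaga_EPsi_Suc:
  assumes "n \<ge> 1"
  shows "psaga_EPsi n f gamma mu xs s (Suc k)
    = (\<Sum>i<n. psaga_EPsi n f gamma mu xs (psaga_step n f gamma s i) k) / real n"
proof -
  let ?L = "\<lambda>k. {is. length is = k \<and> set is \<subseteq> {..<n}}"
  let ?F = "\<lambda>s is. psaga_Psi n gamma mu xs (psaga_run n f gamma s is)"
  have "?L (Suc k) = (\<lambda>(i, is). i # is) ` ({..<n} \<times> ?L k)"
    by (auto simp: length_Suc_conv image_iff)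
  moreover have "inj_on (\<lambda>(i, is). i # is) ({..<n} \<times> ?L k)" by (auto simp: inj_on_def)
  ultimately have "(\<Sum>is\<in>?L (Suc k). ?F s is) = (\<Sum>(i, is)\<in>{..<n} \<times> ?L k. ?F s (i # is))"
    by (simp add: sum.reindex case_prod_unfold)
  also have "\<dots> = (\<Sum>i<n. \<Sum>is\<in>?L k. ?F (psaga_step n f gamma s i) is)"
    by (simp add: sum.cartesian_product[symmetric] psaga_run_def)
  finally show ?thesis
    using assms by (simp add: psaga_EPsi_def sum_divide_distrib field_simps)
qed

lemma psaga_EPsi_le_power:
  assumes n: "n \<ge> 1" and q: "q \<ge> 0"
    and step: "\<And>s. (\<Sum>i<n. psaga_Psi n gamma mu xs (psaga_step n f gamma s i))
                   \<le> real n * q * psaga_Psi n gamma mu xs s"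
  shows "psaga_EPsi n f gamma mu xs s k \<le> q ^ k * psaga_Psi n gamma mu xs s"
proof (induction k arbitrary: s)
  case 0
  then show ?case by (simp add: psaga_EPsi_0)
next
  case (Suc k)
  have "psaga_EPsi n f gamma mu xs s (Suc k)
      = (\<Sum>i<n. psaga_EPsi n f gamma mu xs (psaga_step n f gamma s i) k) / real n"
    by (rule psaga_EPsi_Suc[OF n])
  also have "\<dots> \<le> q ^ k * (\<Sum>i<n. psaga_Psi n gamma mu xs (psaga_step n f gamma s i)) / real n"
    unfolding sum_distrib_left using n by (intro divide_right_mono sum_mono Suc.IH) auto
  also have "\<dots> \<le> q ^ k * (real n * q * psaga_Psi n gamma mu xs s) / real n"
    using n q step by (intro divide_right_mono mult_left_mono) auto
  also have "\<dots> = q ^ Suc k * psaga_Psi n gamma mu xs s"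
    using n by simp
  finally show ?case .
qed

lemma geometric_decay_le_eps:
  fixes c q P eps :: real
  assumes c: "c > 0" and q: "0 \<le> q" "q \<le> 1 - 1 / c" and P: "0 \<le> P" and eps: "eps > 0"
    and k: "c * ln (P / eps) \<le> real k"
  shows "q ^ k * P \<le> eps"
proof (cases "P \<le> eps")
  case True
  have "1 / c > 0" using c by simp
  then have "q ^ k \<le> 1" using q by (intro power_le_one) linarith+
  then show ?thesis using True P mult_right_mono[of "q ^ k" 1 P] by linarith
next
  case False
  then have "P / eps > 0" using eps by simp
  have "q ^ k \<le> exp (- 1 / c) ^ k"
    using q exp_ge_add_one_self[of "- 1 / c"] by (intro power_mono) auto
  also have "\<dots> = inverse (exp (real k / c))"
    by (simp add: exp_of_nat_mult[symmetric] exp_minus power_inverse)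
  also have "\<dots> \<le> inverse (P / eps)"
  proof (rule le_imp_inverse_le)
    have "ln (P / eps) \<le> real k / c" using k c by (simp add: field_simps mult.commute)
    then show "P / eps \<le> exp (real k / c)"
      using \<open>P / eps > 0\<close> by (metis exp_le_cancel_iff exp_ln)
  qed fact
  finally show ?thesis
    using False eps by (simp add: pos_le_divide_eq)
qed

lemma point_saga_stepsize:
  fixes mu nu gamma :: real
  assumes n: "n \<ge> 1" and mu: "mu > 0" and nu: "nu > 0"
    and gamma_def: "gamma = 1 / (nu\<^sup>2 / mu + (real n - 1) * mu)"
  shows "gamma > 0"
    and "gamma * (nu\<^sup>2 + (real n - 1) * mu\<^sup>2) = mu"
    and "1 / (1 + gamma * mu) = 1 - 1 / (real n + nu\<^sup>2 / mu\<^sup>2)"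
proof -
  have den: "nu\<^sup>2 / mu + (real n - 1) * mu > 0"
    using n mu nu by (intro add_pos_nonneg) auto
  then show "gamma > 0" using gamma_def by simp
  show "gamma * (nu\<^sup>2 + (real n - 1) * mu\<^sup>2) = mu"
    using mu den by (simp add: gamma_def field_simps power2_eq_square)
  have "nu\<^sup>2 / mu\<^sup>2 > 0" using mu nu by simp
  then have "real n + nu\<^sup>2 / mu\<^sup>2 > 1" using n by linarith
  moreover have "gamma * mu = 1 / (real n + nu\<^sup>2 / mu\<^sup>2 - 1)"
    using mu by (simp add: gamma_def field_simps power2_eq_square)
  ultimately show "1 / (1 + gamma * mu) = 1 - 1 / (real n + nu\<^sup>2 / mu\<^sup>2)"
    by (simp only:) (simp add: field_simps)
qed

theorem mainTheorem13:
  fixes n :: nat and f :: "nat \<Rightarrow> 'a::euclidean_space \<Rightarrow> real"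
    and mu nu gamma eps :: real and xstar x0 :: 'a and w0 :: "nat \<Rightarrow> 'a" and k :: nat
  assumes n_pos: "n \<ge> 1"
    and diff: "\<And>i x. i < n \<Longrightarrow> f i differentiable (at x)"
    and sconv: "\<And>i. i < n \<Longrightarrow> strongly_convex mu (f i)"
    and mu_pos: "mu > 0"
    and nu_pos: "nu > 0"
    and xstar_min: "\<And>y. (1 / real n) * (\<Sum>i<n. f i xstar) \<le> (1 / real n) * (\<Sum>i<n. f i y)"
    and similarity: "\<And>xs :: nat \<Rightarrow> 'a.
        (1 / real n) * (\<Sum>j<n. (norm (grad (f j) (xs j)
            - (1 / real n) *\<^sub>R (\<Sum>i<n. grad (f i) (xs i)) - grad (f j) xstar))\<^sup>2)
        \<le> nu\<^sup>2 * ((1 / real n) * (\<Sum>j<n. (norm (xs j - xstar))\<^sup>2))"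
    and gamma_def: "gamma = 1 / (nu\<^sup>2 / mu + (real n - 1) * mu)"
    and eps_pos: "eps > 0"
    and k_large: "real k \<ge> (real n + nu\<^sup>2 / mu\<^sup>2) * ln (psaga_Psi n gamma mu xstar (x0, w0) / eps)"
  shows "psaga_EPsi n f gamma mu xstar (x0, w0) k \<le> eps"
proof -
  note stepsize = point_saga_stepsize[OF n_pos mu_pos nu_pos gamma_def]
  define q where "q = 1 / (1 + gamma * mu)"
  have "q \<ge> 0" using stepsize(1) mu_pos by (simp add: q_def)
  have stationary: "(\<Sum>i<n. grad (f i) xstar) = 0"
    using xstar_min n_pos by (intro grad_sum_eq_0_at_minimizer) (auto intro: diff simp: divide_le_cancel)
  have sim: "point_saga_similarity n f nu xstar"
    using similarity unfolding point_saga_similarity_def by blast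
  have "(\<Sum>i<n. psaga_Psi n gamma mu xstar (psaga_step n f gamma s i))
      \<le> real n * q * psaga_Psi n gamma mu xstar s" for s
    using psaga_step_contraction[OF n_pos diff sconv mu_pos stepsize(1) stationary sim
        eq_refl[OF stepsize(2)]]
    by (simp add: q_def)
  then have "psaga_EPsi n f gamma mu xstar (x0, w0) k \<le> q ^ k * psaga_Psi n gamma mu xstar (x0, w0)"
    by (rule psaga_EPsi_le_power[OF n_pos \<open>q \<ge> 0\<close>])
  also have "\<dots> \<le> eps"
  proof (rule geometric_decay_le_eps[of "real n + nu\<^sup>2 / mu\<^sup>2"])
    show "q \<le> 1 - 1 / (real n + nu\<^sup>2 / mu\<^sup>2)" using stepsize(3) by (simp add: q_def)
    show "0 \<le> psaga_Psi n gamma mu xstar (x0, w0)"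
      using stepsize(1) mu_pos by (simp add: psaga_Psi_def sum_nonneg)
  qed (use n_pos \<open>q \<ge> 0\<close> eps_pos k_large in \<open>auto simp: add_pos_nonneg mult.commute\<close>)
  finally show ?thesis .
qed

end
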